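(* Let $n\ge 3$ and let $C_n$ be the cycle with vertices $v_1,\dots,v_n$ and edges $v_1v_2,v_2v_3,\dots,v_{n-1}v_n,v_nv_1$. Then $P_{\{v_1\}}(C_n)=\tfrac34$.
   Context: Classical zero forcing: given a set of black vertices (the rest white), the color change rule turns a white vertex $v$ black if $v$ is the only white neighbor of some black vertex $u$. A set $S$ is a zero forcing set if starting with $S$ black, finitely many applications of this rule make all of $V(G)$ black. Probabilistic process: for a vertex $u$, $N(u)$ is its open neighborhood, $N[u]=N(u)\cup\{u\}$, $\deg(u)=|N(u)|$. Given a current black set $Z$, $F(u\to v)=0$ if $u\notin Z$, or $v\notin N(u)$, or $N[u]\subseteq Z$; otherwise $F(u\to v)=|N[u]\cap Z|/\deg(u)$. One global application of the probabilistic color change rule: black vertices stay black; independently for every pair $(u,v)$ with $u$ black and $v\in N(u)$ white, $u$ forces $v$ with probability $F(u\to v)$; a white vertex becomes black iff some black neighbor forces it. Starting with black set $A$ at step $0$ and applying this rule repeatedly, let $S^k$ be the set of colorings reachable with positive probability after exactly $k$ steps and $P^{(k)}$ the probability distribution on them. Let $T^k\subseteq S^k$ be the colorings whose black set contains a classical zero forcing set of $G$. Define $P_A(G)=P^{(k_0)}(T^{k_0})$ where $k_0$ is the least $k\ge 0$ with $T^k\neq\emptyset$. *)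

theory Defs
  imports "HOL-Probability.Probability"
begin

text \<open>A finite simple graph is given by a vertex set V and a symmetric irreflexive
adjacency relation E (only its restriction to V matters).\<close>

definition nbhd :: "'a set \<Rightarrow> ('a \<Rightarrow> 'a \<Rightarrow> bool) \<Rightarrow> 'a \<Rightarrow> 'a set" where
  "nbhd V E u = {w \<in> V. E u w}"

definition cnbhd :: "'a set \<Rightarrow> ('a \<Rightarrow> 'a \<Rightarrow> bool) \<Rightarrow> 'a \<Rightarrow> 'a set" where
  "cnbhd V E u = insert u (nbhd V E u)"

definition deg :: "'a set \<Rightarrow> ('a \<Rightarrow> 'a \<Rightarrow> bool) \<Rightarrow> 'a \<Rightarrow> nat" where
  "deg V E u = card (nbhd V E u)"

inductive zf_derivable :: "'a set \<Rightarrow> ('a \<Rightarrow> 'a \<Rightarrow> bool) \<Rightarrow> 'a set \<Rightarrow> 'a set \<Rightarrow> bool"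
  for V E S where
  zf_base: "zf_derivable V E S S"
| zf_step: "\<lbrakk> zf_derivable V E S Z; u \<in> Z; v \<in> nbhd V E u; v \<notin> Z;
             \<forall>w \<in> nbhd V E u. w \<noteq> v \<longrightarrow> w \<in> Z \<rbrakk>
            \<Longrightarrow> zf_derivable V E S (insert v Z)"

definition zero_forcing_set :: "'a set \<Rightarrow> ('a \<Rightarrow> 'a \<Rightarrow> bool) \<Rightarrow> 'a set \<Rightarrow> bool" where
  "zero_forcing_set V E S \<longleftrightarrow> S \<subseteq> V \<and> zf_derivable V E S V"

definition force_prob :: "'a set \<Rightarrow> ('a \<Rightarrow> 'a \<Rightarrow> bool) \<Rightarrow> 'a set \<Rightarrow> 'a \<Rightarrow> 'a \<Rightarrow> real" where
  "force_prob V E Z u v =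
     (if u \<notin> Z \<or> v \<notin> nbhd V E u \<or> cnbhd V E u \<subseteq> Z then 0
      else real (card (cnbhd V E u \<inter> Z)) / real (deg V E u))"

definition force_pairs :: "'a set \<Rightarrow> ('a \<Rightarrow> 'a \<Rightarrow> bool) \<Rightarrow> 'a set \<Rightarrow> ('a \<times> 'a) set" where
  "force_pairs V E Z = {(u, v). u \<in> Z \<and> v \<in> nbhd V E u \<and> v \<notin> Z}"

text \<open>One global application of the probabilistic color change rule: independent
Bernoulli trials for every pair; a white vertex becomes black iff some pair forcing it succeeds.\<close>
definition prob_step :: "'a set \<Rightarrow> ('a \<Rightarrow> 'a \<Rightarrow> bool) \<Rightarrow> 'a set \<Rightarrow> 'a set pmf" where
  "prob_step V E Z =
     map_pmf (\<lambda>f. Z \<union> {v. \<exists>u. (u, v) \<in> force_pairs V E Z \<and> f (u, v)})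
       (Pi_pmf (force_pairs V E Z) False
          (\<lambda>(u, v). bernoulli_pmf (force_prob V E Z u v)))"

fun prob_dist :: "'a set \<Rightarrow> ('a \<Rightarrow> 'a \<Rightarrow> bool) \<Rightarrow> 'a set \<Rightarrow> nat \<Rightarrow> 'a set pmf" where
  "prob_dist V E A 0 = return_pmf A"
| "prob_dist V E A (Suc k) = bind_pmf (prob_dist V E A k) (prob_step V E)"

text \<open>S^k: colorings reachable with positive probability; T^k: those containing a ZF set.\<close>
definition reach_set :: "'a set \<Rightarrow> ('a \<Rightarrow> 'a \<Rightarrow> bool) \<Rightarrow> 'a set \<Rightarrow> nat \<Rightarrow> 'a set set" where
  "reach_set V E A k = set_pmf (prob_dist V E A k)"

definition zf_reach_set :: "'a set \<Rightarrow> ('a \<Rightarrow> 'a \<Rightarrow> bool) \<Rightarrow> 'a set \<Rightarrow> nat \<Rightarrow> 'a set set" where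
  "zf_reach_set V E A k = {Z \<in> reach_set V E A k. \<exists>S \<subseteq> Z. zero_forcing_set V E S}"

definition P_zf :: "'a set \<Rightarrow> ('a \<Rightarrow> 'a \<Rightarrow> bool) \<Rightarrow> 'a set \<Rightarrow> real" where
  "P_zf V E A =
     (let k0 = (LEAST k. zf_reach_set V E A k \<noteq> {})
      in measure_pmf.prob (prob_dist V E A k0) (zf_reach_set V E A k0))"

text \<open>Cycle C_n on vertices 0..n-1 (vertex i stands for v_(i+1)); edges i ~ i+1 mod n.\<close>
definition cycle_V :: "nat \<Rightarrow> nat set" where
  "cycle_V n = {0..<n}"

definition cycle_E :: "nat \<Rightarrow> nat \<Rightarrow> nat \<Rightarrow> bool" where
  "cycle_E n i j \<longleftrightarrow> i < n \<and> j < n \<and> (j = (i + 1) mod n \<or> i = (j + 1) mod n)"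

end

theory Submission imports Defs begin

(* Idea: a single black vertex v of C_n can never force (it has two white
   neighbours), so {v} contains no zero forcing set, while every pair of
   adjacent vertices is a zero forcing set (forcing propagates around the
   cycle).  Hence the process first reaches a coloring containing a zero
   forcing set after exactly one step, and this happens unless both of the
   independent forcing attempts of v fail, each with probability 1/2:
   P = 1 - 1/2 * 1/2 = 3/4. *)

definition contains_zfs :: "'a set \<Rightarrow> ('a \<Rightarrow> 'a \<Rightarrow> bool) \<Rightarrow> 'a set \<Rightarrow> bool" where
  "contains_zfs V E Z \<longleftrightarrow> (\<exists>S \<subseteq> Z. zero_forcing_set V E S)"

definition step_outcome ::
  "'a set \<Rightarrow> ('a \<Rightarrow> 'a \<Rightarrow> bool) \<Rightarrow> 'a set \<Rightarrow> ('a \<times> 'a \<Rightarrow> bool) \<Rightarrow> 'a set" where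
  "step_outcome V E Z f = Z \<union> {v. \<exists>u. (u, v) \<in> force_pairs V E Z \<and> f (u, v)}"

lemma prob_step_eq:
  "prob_step V E Z = map_pmf (step_outcome V E Z)
     (Pi_pmf (force_pairs V E Z) False (\<lambda>(u, v). bernoulli_pmf (force_prob V E Z u v)))"
  unfolding prob_step_def step_outcome_def ..

(* Force probabilities are genuine probabilities: a black vertex u with a white
   vertex in its closed neighbourhood has at most deg u black vertices in its closed neighbourhood. *)
lemma force_prob_bounds: "0 \<le> force_prob V E Z u v \<and> force_prob V E Z u v \<le> 1"
proof (cases "u \<notin> Z \<or> v \<notin> nbhd V E u \<or> cnbhd V E u \<subseteq> Z")
  case True
  then show ?thesis by (simp add: force_prob_def)
next
  case False
  then have v: "v \<in> nbhd V E u" and not_sub: "\<not> cnbhd V E u \<subseteq> Z" by auto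
  show ?thesis
  proof (cases "finite (nbhd V E u)")
    case fin: True
    have "finite (cnbhd V E u)" using fin by (simp add: cnbhd_def)
    moreover have "cnbhd V E u \<inter> Z \<subset> cnbhd V E u" using not_sub by blast
    ultimately have "card (cnbhd V E u \<inter> Z) < card (cnbhd V E u)"
      by (rule psubset_card_mono)
    also have "card (cnbhd V E u) \<le> Suc (deg V E u)"
      unfolding cnbhd_def deg_def by (rule card_insert_le_m1) (use v in auto)
    finally have "card (cnbhd V E u \<inter> Z) \<le> deg V E u" by simp
    then show ?thesis
      using False by (cases "deg V E u = 0") (simp_all add: force_prob_def divide_le_eq_1)
  next
    case False
    then show ?thesis by (simp add: force_prob_def deg_def)
  qed
qed

lemma prob_step_support:
  assumes "Z' \<in> set_pmf (prob_step V E Z)"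
  shows "Z \<subseteq> Z' \<and> Z' \<subseteq> Z \<union> (\<Union>u\<in>Z. nbhd V E u)"
  using assms unfolding prob_step_eq step_outcome_def force_pairs_def by auto

lemma prob_step_stay:
  assumes "finite (force_pairs V E Z)"
  shows "measure_pmf.prob (prob_step V E Z) {Z} =
         (\<Prod>(u, v)\<in>force_pairs V E Z. 1 - force_prob V E Z u v)"
proof -
  let ?FP = "force_pairs V E Z"
  have "step_outcome V E Z -` {Z} = Pi ?FP (\<lambda>_. {False})"
    unfolding step_outcome_def force_pairs_def by auto
  then have "measure_pmf.prob (prob_step V E Z) {Z} =
      measure_pmf.prob (Pi_pmf ?FP False (\<lambda>(u, v). bernoulli_pmf (force_prob V E Z u v)))
        (Pi ?FP (\<lambda>_. {False}))"
    by (simp add: prob_step_eq)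
  also have "\<dots> = (\<Prod>x\<in>?FP. measure_pmf.prob
                    ((\<lambda>(u, v). bernoulli_pmf (force_prob V E Z u v)) x) {False})"
    by (rule measure_Pi_pmf_Pi[OF assms])
  also have "\<dots> = (\<Prod>(u, v)\<in>?FP. 1 - force_prob V E Z u v)"
    by (intro prod.cong) (auto simp: measure_pmf_single force_prob_bounds)
  finally show ?thesis .
qed

lemma zf_reach_set_eq:
  "zf_reach_set V E A k = set_pmf (prob_dist V E A k) \<inter> {Z. contains_zfs V E Z}"
  unfolding zf_reach_set_def reach_set_def contains_zfs_def by auto

lemma P_zf_first_step:
  assumes no_zfs: "\<not> contains_zfs V E A"
    and pos: "measure_pmf.prob (prob_step V E A) {Z. contains_zfs V E Z} > 0"
  shows "P_zf V E A = measure_pmf.prob (prob_step V E A) {Z. contains_zfs V E Z}"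
proof -
  let ?ZF = "{Z. contains_zfs V E Z}"
  have dist1: "prob_dist V E A 1 = prob_step V E A"
    by (simp add: bind_return_pmf)
  have prob1: "measure_pmf.prob (prob_dist V E A 1) (zf_reach_set V E A 1) =
               measure_pmf.prob (prob_step V E A) ?ZF"
    unfolding zf_reach_set_eq dist1 by (simp add: Int_commute measure_Int_set_pmf)
  have "zf_reach_set V E A 1 \<noteq> {}" using prob1 pos by auto
  moreover have "zf_reach_set V E A 0 = {}" using no_zfs by (simp add: zf_reach_set_eq)
  then have "1 \<le> k" if "zf_reach_set V E A k \<noteq> {}" for k
    using that by (cases k) auto
  ultimately have "(LEAST k. zf_reach_set V E A k \<noteq> {}) = 1"
    by (intro Least_equality)
  then show ?thesis using prob1 by (simp add: P_zf_def)
qed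

lemma cycle_nbhd:
  assumes "u < n"
  shows "nbhd (cycle_V n) (cycle_E n) u = {(u + 1) mod n, (u + n - 1) mod n}"
proof -
  have pred: "(u + n - 1) mod n = (if u = 0 then n - 1 else u - 1)"
  proof (cases "u = 0")
    case False
    then have "u + n - 1 = (u - 1) + n" by simp
    then have "(u + n - 1) mod n = (u - 1) mod n" by simp
    then show ?thesis using False assms by simp
  qed (use assms in simp)
  have succ: "(w + 1) mod n = (if w + 1 < n then w + 1 else 0)" if "w < n" for w
  proof (cases "w + 1 < n")
    case False
    then have "w + 1 = n" using that by linarith
    then show ?thesis by simp
  qed simp
  have last: "w = n - 1" if "w < n" "n dvd w + 1" for w
    using that dvd_imp_le[OF that(2)] by linarith
  have "w \<in> nbhd (cycle_V n) (cycle_E n) u \<longleftrightarrow> w = (u + 1) mod n \<or> w = (u + n - 1) mod n" for w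
    unfolding nbhd_def cycle_V_def cycle_E_def pred
    using assms last by (auto simp del: One_nat_def simp add: succ split: if_splits)
  then show ?thesis by auto
qed

lemma cycle_nbhd_0:
  assumes "2 \<le> n"
  shows "nbhd (cycle_V n) (cycle_E n) 0 = {1, n - 1}"
  using cycle_nbhd[of 0 n] assms by simp

lemma cycle_nbhd_pred:
  assumes "1 \<le> k" "k < n"
  shows "nbhd (cycle_V n) (cycle_E n) (k - 1) = {k, if k = 1 then n - 1 else k - 2}"
proof -
  have "(k - 1 + n - 1) mod n = (if k = 1 then n - 1 else k - 2)"
  proof (cases "k = 1")
    case False
    then have "k - 1 + n - 1 = (k - 2) + n" using assms by simp
    then have "(k - 1 + n - 1) mod n = (k - 2) mod n" by simp
    then show ?thesis using False assms by simp
  qed (use assms in simp)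
  then show ?thesis using cycle_nbhd[of "k - 1" n] assms by simp
qed

(* Forcing runs around the cycle: once 0, ..., k-1 are black (and, if k = 1, also
   the other neighbour n-1 of vertex 0), vertex k-1 forces k, and so on up to n-1. *)
lemma cycle_forcing_chain:
  assumes k: "1 \<le> k" "k \<le> n" and B: "B \<subseteq> cycle_V n"
    and start: "zf_derivable (cycle_V n) (cycle_E n) S (B \<union> {0..<k})"
    and closing: "k = 1 \<Longrightarrow> n - 1 \<in> B"
  shows "zf_derivable (cycle_V n) (cycle_E n) S (cycle_V n)"
proof -
  have "zf_derivable (cycle_V n) (cycle_E n) S (B \<union> {0..<k + d})" if "k + d \<le> n" for d
    using that
  proof (induction d)
    case 0
    show ?case using start by simp
  next
    case (Suc d)
    define m where "m = k + d"
    let ?Z = "B \<union> {0..<m}"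
    have m: "1 \<le> m" "m < n" using Suc.prems k by (simp_all add: m_def)
    have IH: "zf_derivable (cycle_V n) (cycle_E n) S ?Z" using Suc m_def by simp
    have extend: "B \<union> {0..<k + Suc d} = insert m ?Z" by (auto simp: m_def)
    show ?case
    proof (cases "m \<in> B")
      case True
      then have "insert m ?Z = ?Z" by blast
      then show ?thesis using IH extend by simp
    next
      case False
      have N: "nbhd (cycle_V n) (cycle_E n) (m - 1) = {m, if m = 1 then n - 1 else m - 2}"
        using cycle_nbhd_pred[OF m] .
      have "(if m = 1 then n - 1 else m - 2) \<in> ?Z"
        using closing k m by (auto simp: m_def)
      then have "zf_derivable (cycle_V n) (cycle_E n) S (insert m ?Z)"
        using IH False m N by (intro zf_step[where u = "m - 1"]) auto
      then show ?thesis using extend by simp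
    qed
  qed
  from this[of "n - k"] k B show ?thesis by (simp add: cycle_V_def sup_absorb2)
qed

lemma cycle_adjacent_zfs:
  assumes "2 \<le> n"
  shows "zero_forcing_set (cycle_V n) (cycle_E n) {0, 1}"
    and "zero_forcing_set (cycle_V n) (cycle_E n) {0, n - 1}"
proof -
  have "{} \<union> {0..<2} = {0, 1::nat}" by auto
  then have "zf_derivable (cycle_V n) (cycle_E n) {0, 1} ({} \<union> {0..<2})"
    by (simp only: zf_base)
  then show "zero_forcing_set (cycle_V n) (cycle_E n) {0, 1}"
    using assms cycle_forcing_chain[of 2 n "{}"]
    by (auto simp: zero_forcing_set_def cycle_V_def)
  have "{n - 1} \<union> {0..<1} = {0, n - 1}" by auto
  then have "zf_derivable (cycle_V n) (cycle_E n) {0, n - 1} ({n - 1} \<union> {0..<1})"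
    by (simp only: zf_base)
  then show "zero_forcing_set (cycle_V n) (cycle_E n) {0, n - 1}"
    using assms cycle_forcing_chain[of 1 n "{n - 1}"]
    by (auto simp: zero_forcing_set_def cycle_V_def)
qed

(* A single black vertex has two white neighbours, so it never forces. *)
lemma cycle_single_not_zfs:
  assumes n: "3 \<le> n"
  shows "\<not> contains_zfs (cycle_V n) (cycle_E n) {0}"
proof -
  have stuck: "Z \<subseteq> {0}" if "zf_derivable (cycle_V n) (cycle_E n) S Z" "S \<subseteq> {0}" for S Z
    using that
  proof (induction rule: zf_derivable.induct)
    case (zf_step Z u v)
    then have "u = 0" by auto
    then have "nbhd (cycle_V n) (cycle_E n) u = {1, n - 1}" using cycle_nbhd_0[of n] n by simp
    moreover have "1 \<noteq> n - 1" "n - 1 \<noteq> 0" using n by auto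
    ultimately show ?case using zf_step by auto
  qed simp
  show ?thesis
  proof
    assume "contains_zfs (cycle_V n) (cycle_E n) {0}"
    then obtain S where "S \<subseteq> {0}" and "zf_derivable (cycle_V n) (cycle_E n) S (cycle_V n)"
      unfolding contains_zfs_def zero_forcing_set_def by auto
    then have "cycle_V n \<subseteq> {0}" using stuck by blast
    moreover have "1 \<in> cycle_V n" using n by (simp add: cycle_V_def)
    ultimately show False by auto
  qed
qed

lemma cycle_step_contains_zfs:
  assumes n: "3 \<le> n" and Z: "Z \<in> set_pmf (prob_step (cycle_V n) (cycle_E n) {0})"
  shows "contains_zfs (cycle_V n) (cycle_E n) Z \<longleftrightarrow> Z \<noteq> {0}"
proof
  assume "contains_zfs (cycle_V n) (cycle_E n) Z"
  then show "Z \<noteq> {0}" using cycle_single_not_zfs[OF n] by auto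
next
  assume "Z \<noteq> {0}"
  moreover have "0 \<in> Z" "Z \<subseteq> {0, 1, n - 1}"
    using prob_step_support[OF Z] cycle_nbhd_0[of n] n by auto
  ultimately have "{0, 1} \<subseteq> Z \<or> {0, n - 1} \<subseteq> Z" by auto
  moreover have "2 \<le> n" using n by simp
  ultimately show "contains_zfs (cycle_V n) (cycle_E n) Z"
    using cycle_adjacent_zfs unfolding contains_zfs_def by blast
qed

(* Vertex 0 attempts to force each of its two neighbours with probability 1/2. *)
lemma cycle_stay_prob:
  assumes n: "3 \<le> n"
  shows "measure_pmf.prob (prob_step (cycle_V n) (cycle_E n) {0}) {{0}} = 1 / 4"
proof -
  let ?V = "cycle_V n" and ?E = "cycle_E n"
  have N: "nbhd ?V ?E 0 = {1, n - 1}" using cycle_nbhd_0[of n] n by simp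
  have distinct: "1 \<noteq> n - 1" using n by simp
  have FP: "force_pairs ?V ?E {0} = {(0, 1), (0, n - 1)}"
    using N n unfolding force_pairs_def by auto
  have "cnbhd ?V ?E 0 = {0, 1, n - 1}" using N by (simp add: cnbhd_def)
  moreover have "deg ?V ?E 0 = 2" using N distinct by (simp add: deg_def)
  ultimately have half: "force_prob ?V ?E {0} 0 v = 1 / 2" if "v \<in> {1, n - 1}" for v
    using that N n unfolding force_prob_def by auto
  show ?thesis
    using prob_step_stay[of ?V ?E "{0}"] distinct half by (simp add: FP)
qed

theorem mainTheorem3:
  fixes n :: nat
  assumes "n \<ge> 3"
  shows "P_zf (cycle_V n) (cycle_E n) {0} = 3 / 4"
proof -
  let ?p = "prob_step (cycle_V n) (cycle_E n) {0}"
  let ?ZF = "{Z. contains_zfs (cycle_V n) (cycle_E n) Z}"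
  have "?ZF \<inter> set_pmf ?p = (UNIV - {{0}}) \<inter> set_pmf ?p"
    using cycle_step_contains_zfs[OF assms] by auto
  then have "measure_pmf.prob ?p ?ZF = measure_pmf.prob ?p (UNIV - {{0}})"
    by (metis measure_Int_set_pmf)
  also have "\<dots> = 3 / 4"
    using measure_pmf.prob_compl[of "{{0}}" ?p] cycle_stay_prob[OF assms] by simp
  finally have prob_ZF: "measure_pmf.prob ?p ?ZF = 3 / 4" .
  show ?thesis
    using P_zf_first_step[OF cycle_single_not_zfs[OF assms]] prob_ZF by simp
qed

end
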